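(* There exists a constant $c>0$ depending only on $m$ such that for every $r>0$ and every $\delta$ with $0<\delta<\lambda_m(r)$, there exists $N(r,\delta)\in\mathbb N$ such that for every $n\ge N(r,\delta)$, \[P\left(\inf_{|t|\ge r}L_n(t)<F_m(0)+\delta\right)\le2\exp\left(-\frac{\delta^2}{8c}n\right).\]
   Context: Fix $m>1/2$. Let $c_m:=\left(\int_{\mathbb R}(1+x^2)^{-m}dx\right)^{-1}$ and $\nu_m(dx):=c_m(1+x^2)^{-m}dx$. Let $(X_n)_{n\ge1}$ be i.i.d. random variables on $(\Omega,\mathcal F,P)$ with law $\nu_m$. Let $L_n(t):=\frac1n\sum_{i=1}^n\log(1+(X_i-t)^2)$ and $F_m(t):=\int_{\mathbb R}\log(1+(x-t)^2)\,\nu_m(dx)$ for $t\in\mathbb R$. For $r>0$ let $\lambda_m(r):=\frac12\min\left\{\frac12\left(m-\frac12\right),\ \frac{F_m(r)-F_m(0)}{4}\right\}$. *)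

theory Defs
  imports "HOL-Probability.Probability"
begin

definition cm :: "real \<Rightarrow> real" where
  "cm m = 1 / (LINT x|lborel. (1 + x\<^sup>2) powr (- m))"

definition nu :: "real \<Rightarrow> real measure" where
  "nu m = density lborel (\<lambda>x. ennreal (cm m * (1 + x\<^sup>2) powr (- m)))"

definition Fm :: "real \<Rightarrow> real \<Rightarrow> real" where
  "Fm m t = (LINT x|nu m. ln (1 + (x - t)\<^sup>2))"

text \<open>Empirical criterion; the random variables are indexed from 1.\<close>
definition Ln :: "(nat \<Rightarrow> 'a \<Rightarrow> real) \<Rightarrow> nat \<Rightarrow> real \<Rightarrow> 'a \<Rightarrow> real" where
  "Ln X n t \<omega> = (1 / real n) * (\<Sum>i=1..n. ln (1 + (X i \<omega> - t)\<^sup>2))"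

definition lam :: "real \<Rightarrow> real \<Rightarrow> real" where
  "lam m r = (1/2) * min ((1/2) * (m - 1/2)) ((Fm m r - Fm m 0) / 4)"

end

theory Submission
  imports Defs
begin

text \<open>The population criterion \<open>F\<close> is even and, by a reflection argument using the unimodality
  of the density, nondecreasing on \<open>[0, \<infinity>)\<close>; so \<open>F t \<ge> F r > F 0 + 8\<delta>\<close> whenever \<open>\<bar>t\<bar> \<ge> r\<close>.
  Far out, for \<open>\<bar>t\<bar> \<ge> 2a\<close>, every sample point in \<open>[-a, a]\<close> contributes at least \<open>ln (1 + a\<^sup>2)\<close>,
  and by Markov's inequality \<open>\<nu>[-a, a] \<ge> 3/4\<close>, so \<open>L\<^sub>n\<close> is large there unless fewer than half of
  the points fall in \<open>[-a, a]\<close>, an event of probability at most \<open>exp (-n/32)\<close>.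
  On the bounded range \<open>r \<le> \<bar>t\<bar> < 2a\<close>, \<open>L\<^sub>n\<close> is 1-Lipschitz in \<open>t\<close>, so it suffices to control it
  on a \<open>\<delta>\<close>-grid; at each grid point the summands \<open>ln (1 + (X\<^sub>i - \<tau>)\<^sup>2)\<close> are nonnegative with
  uniformly bounded second moments, and a Bernstein-type lower-tail bound applies. For large \<open>n\<close>
  the number of grid points is absorbed into the exponent.\<close>

lemma integrable_one_plus_sq_powr:
  fixes a :: real
  assumes "a > 1/2"
  shows "integrable lborel (\<lambda>x::real. (1 + x\<^sup>2) powr (-a))"
proof -
  define g :: "real \<Rightarrow> real" where
    "g x = indicator {1..} x * x powr (-2*a) + indicator {1..} (-x) * (-x) powr (-2*a) + indicator {-1..1} x"
    for x
  have "(\<lambda>x::real. x powr (-2*a)) integrable_on {1..}"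
    using has_integral_powr_to_inf[of "-2*a" 1] assms by (auto simp: integrable_on_def)
  hence "(\<lambda>x::real. x powr (-2*a)) absolutely_integrable_on {1..}"
    by (rule nonnegative_absolutely_integrable_1) simp
  hence right: "integrable lborel (\<lambda>x::real. indicator {1..} x * x powr (-2*a))"
    unfolding set_integrable_def by (subst (asm) integrable_completion) auto
  hence "integrable lborel (\<lambda>x::real. indicator {1..} (-x) * (-x) powr (-2*a))"
    using lborel_integrable_real_affine_iff[of "-1" "\<lambda>x. indicator {1..} x * x powr (-2*a)" 0]
    by simp
  moreover have "integrable lborel (\<lambda>x::real. indicator {-1..1} x :: real)"
    by (intro integrable_real_indicator) auto
  ultimately have g: "integrable lborel g"
    unfolding g_def using right by (intro Bochner_Integration.integrable_add)
  have le: "norm ((1 + x\<^sup>2) powr (-a)) \<le> norm (g x)" for x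
  proof -
    have "(1 + x\<^sup>2) powr (-a) \<le> (\<bar>x\<bar> powr 2) powr (-a)" if "\<bar>x\<bar> \<ge> 1"
      using that assms by (intro powr_mono2') (auto simp: powr_realpow abs_square_le_1)
    moreover have "(\<bar>x\<bar> powr 2) powr (-a) = \<bar>x\<bar> powr (-2*a)"
      by (simp only: powr_powr mult_minus_right) simp
    moreover have "(1 + x\<^sup>2) powr (-a) \<le> 1 powr (-a)"
      using assms by (intro powr_mono2') auto
    ultimately have "(1 + x\<^sup>2) powr (-a) \<le> g x"
      by (cases "x \<ge> 1"; cases "x \<le> -1") (auto simp: g_def indicator_def)
    thus ?thesis by simp
  qed
  show ?thesis
    using le by (intro Bochner_Integration.integrable_bound[OF g] AE_I2) measurable
qed

definition nu_density :: "real \<Rightarrow> real \<Rightarrow> real" where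
  "nu_density m x = cm m * (1 + x\<^sup>2) powr (- m)"

lemma nu_eq_density: "nu m = density lborel (\<lambda>x. ennreal (nu_density m x))"
  unfolding nu_def nu_density_def ..

lemma sets_nu [measurable_cong]: "sets (nu m) = sets borel"
  unfolding nu_def by simp

lemma space_nu: "space (nu m) = UNIV"
  unfolding nu_def by simp

lemma nu_density_measurable [measurable]: "nu_density m \<in> borel_measurable borel"
  unfolding nu_density_def by measurable

lemma cm_pos:
  assumes "m > 1/2"
  shows "cm m > 0"
proof -
  have int: "integrable lborel (\<lambda>x::real. (1 + x\<^sup>2) powr (- m))"
    using integrable_one_plus_sq_powr[OF assms] by simp
  have "(LINT x::real|lborel. (1 + x\<^sup>2) powr (- m)) \<noteq> 0"
  proof
    assume "(LINT x|lborel. (1 + x\<^sup>2) powr (- m)) = 0"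
    hence "AE x in lborel. (1 + x\<^sup>2) powr (- m) = (0::real)"
      using int by (subst (asm) integral_nonneg_eq_0_iff_AE) auto
    moreover have "(1 + x\<^sup>2) powr (- m) \<noteq> 0" for x :: real
      by (simp add: power2_eq_square add_nonneg_eq_0_iff)
    ultimately have "AE x::real in lborel. False" by (auto elim: eventually_mono)
    thus False using ae_filter_eq_bot_iff[of "lborel :: real measure"] trivial_limit_def by simp
  qed
  moreover have "(LINT x::real|lborel. (1 + x\<^sup>2) powr (- m)) \<ge> 0"
    by (rule Bochner_Integration.integral_nonneg) simp
  ultimately have "(LINT x::real|lborel. (1 + x\<^sup>2) powr (- m)) > 0" by linarith
  thus ?thesis unfolding cm_def by simp
qed

lemma nu_density_nonneg: "m > 1/2 \<Longrightarrow> nu_density m x \<ge> 0"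
  unfolding nu_density_def using cm_pos[of m] by simp

lemma integrable_nu_density: "m > 1/2 \<Longrightarrow> integrable lborel (nu_density m)"
  unfolding nu_density_def using integrable_one_plus_sq_powr[of m] by simp

lemma prob_space_nu:
  assumes "m > 1/2"
  shows "prob_space (nu m)"
proof
  have "emeasure (nu m) (space (nu m)) = (\<integral>\<^sup>+x. ennreal (nu_density m x) \<partial>lborel)"
    unfolding nu_eq_density by (simp add: emeasure_density)
  also have "\<dots> = ennreal (\<integral>x. nu_density m x \<partial>lborel)"
    using assms by (intro nn_integral_eq_integral integrable_nu_density AE_I2 nu_density_nonneg)
  also have "(\<integral>x. nu_density m x \<partial>lborel) = 1"
    using cm_pos[OF assms] unfolding nu_density_def by (simp add: cm_def)
  finally show "emeasure (nu m) (space (nu m)) = 1" by simp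
qed

lemma integrable_nu_iff:
  fixes f :: "real \<Rightarrow> real"
  assumes "m > 1/2" and [measurable]: "f \<in> borel_measurable borel"
  shows "integrable (nu m) f \<longleftrightarrow> integrable lborel (\<lambda>x. nu_density m x * f x)"
  unfolding nu_eq_density using assms(1) by (subst integrable_density) (auto simp: nu_density_nonneg)

lemma integral_nu:
  fixes f :: "real \<Rightarrow> real"
  assumes "m > 1/2" and [measurable]: "f \<in> borel_measurable borel"
  shows "integral\<^sup>L (nu m) f = (\<integral>x. nu_density m x * f x \<partial>lborel)"
  unfolding nu_eq_density using assms(1) by (subst integral_density) (auto simp: nu_density_nonneg)

lemma integrable_nu_powr:
  assumes "m > 1/2" "b < m - 1/2"
  shows "integrable (nu m) (\<lambda>x. (1 + x\<^sup>2) powr b)"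
proof -
  have "nu_density m x * (1 + x\<^sup>2) powr b = cm m * (1 + x\<^sup>2) powr (- (m - b))" for x
    unfolding nu_density_def by (simp add: mult.assoc flip: powr_add)
  thus ?thesis
    using assms integrable_one_plus_sq_powr[of "m - b"] by (subst integrable_nu_iff) auto
qed

lemma ln_le_powr_div:
  fixes u e :: real
  assumes "0 < u" "0 < e"
  shows "ln u \<le> u powr e / e"
proof -
  have "e * ln u = ln (u powr e)" using assms by (simp add: ln_powr)
  also have "\<dots> \<le> u powr e" using assms by (intro ln_le_minus_one[THEN order.trans]) auto
  finally show ?thesis using assms by (simp add: field_simps)
qed

lemma ln_one_plus_sq_diff_le:
  fixes x t :: real
  shows "ln (1 + (x - t)\<^sup>2) \<le> ln 2 + ln (1 + t\<^sup>2) + ln (1 + x\<^sup>2)"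
proof -
  have bound: "1 + (x - t)\<^sup>2 \<le> 2 * (1 + t\<^sup>2) * (1 + x\<^sup>2)"
    using sum_squares_ge_zero[of "x + t" 0] zero_le_power2[of "t * x"]
    by (simp add: power2_eq_square algebra_simps)
  have pos: "0 < 1 + y\<^sup>2" for y :: real by (simp add: add_pos_nonneg)
  have "ln (1 + (x - t)\<^sup>2) \<le> ln (2 * (1 + t\<^sup>2) * (1 + x\<^sup>2))"
    using bound pos by (intro ln_mono) auto
  also have "\<dots> = ln 2 + ln (1 + t\<^sup>2) + ln (1 + x\<^sup>2)"
    using pos by (simp only: ln_mult_pos mult_pos_pos zero_less_numeral)
  finally show ?thesis .
qed

lemma sq_ln_one_plus_sq_diff_le:
  fixes x t :: real
  shows "(ln (1 + (x - t)\<^sup>2))\<^sup>2 \<le> 2 * (ln 2 + ln (1 + t\<^sup>2))\<^sup>2 + 2 * (ln (1 + x\<^sup>2))\<^sup>2"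
proof -
  define A where "A = ln 2 + ln (1 + t\<^sup>2)"
  define B where "B = ln (1 + x\<^sup>2)"
  have "(ln (1 + (x - t)\<^sup>2))\<^sup>2 \<le> (A + B)\<^sup>2"
    using ln_one_plus_sq_diff_le[of x t] by (intro power_mono) (simp_all add: A_def B_def)
  also have "\<dots> \<le> 2 * A\<^sup>2 + 2 * B\<^sup>2"
    using zero_le_power2[of "A - B"] by (simp add: power2_eq_square algebra_simps)
  finally show ?thesis unfolding A_def B_def .
qed

lemma integrable_nu_sq_ln:
  assumes m: "m > 1/2"
  shows "integrable (nu m) (\<lambda>x. (ln (1 + x\<^sup>2))\<^sup>2)"
proof -
  define e where "e = (m - 1/2) / 4"
  have e: "e > 0" using m by (simp add: e_def)
  show ?thesis
  proof (rule Bochner_Integration.integrable_bound)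
    show "integrable (nu m) (\<lambda>x. (1 + x\<^sup>2) powr (2 * e) / e\<^sup>2)"
      using integrable_nu_powr[OF m, of "2 * e"] m by (simp add: e_def)
    show "AE x in nu m. norm ((ln (1 + x\<^sup>2))\<^sup>2) \<le> norm ((1 + x\<^sup>2) powr (2 * e) / e\<^sup>2)"
    proof (rule AE_I2)
      fix x :: real
      have "ln (1 + x\<^sup>2) \<le> (1 + x\<^sup>2) powr e / e"
        using e by (intro ln_le_powr_div) (auto intro: add_pos_nonneg)
      hence "(ln (1 + x\<^sup>2))\<^sup>2 \<le> ((1 + x\<^sup>2) powr e / e)\<^sup>2"
        by (intro power_mono) simp_all
      also have "\<dots> = (1 + x\<^sup>2) powr (2 * e) / e\<^sup>2"
        by (simp add: power_divide power2_eq_square flip: powr_add)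
      finally show "norm ((ln (1 + x\<^sup>2))\<^sup>2) \<le> norm ((1 + x\<^sup>2) powr (2 * e) / e\<^sup>2)"
        by simp
    qed
  qed measurable
qed

lemma integrable_nu_sq_ln_shift:
  assumes m: "m > 1/2"
  shows "integrable (nu m) (\<lambda>x. (ln (1 + (x - t)\<^sup>2))\<^sup>2)"
proof (rule Bochner_Integration.integrable_bound)
  interpret prob_space "nu m" by (rule prob_space_nu[OF m])
  show "integrable (nu m) (\<lambda>x. 2 * (ln 2 + ln (1 + t\<^sup>2))\<^sup>2 + 2 * (ln (1 + x\<^sup>2))\<^sup>2)"
    using integrable_nu_sq_ln[OF m] by simp
  show "AE x in nu m. norm ((ln (1 + (x - t)\<^sup>2))\<^sup>2)
          \<le> norm (2 * (ln 2 + ln (1 + t\<^sup>2))\<^sup>2 + 2 * (ln (1 + x\<^sup>2))\<^sup>2)"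
    using sq_ln_one_plus_sq_diff_le by simp
qed measurable

lemma integrable_nu_ln_shift:
  assumes m: "m > 1/2"
  shows "integrable (nu m) (\<lambda>x. ln (1 + (x - t)\<^sup>2))"
proof (rule Bochner_Integration.integrable_bound)
  interpret prob_space "nu m" by (rule prob_space_nu[OF m])
  show "integrable (nu m) (\<lambda>x. 1 + (ln (1 + (x - t)\<^sup>2))\<^sup>2)"
    using integrable_nu_sq_ln_shift[OF m] by simp
  show "AE x in nu m. norm (ln (1 + (x - t)\<^sup>2)) \<le> norm (1 + (ln (1 + (x - t)\<^sup>2))\<^sup>2)"
  proof (rule AE_I2)
    fix x :: real
    have "0 \<le> ln (1 + (x - t)\<^sup>2)" by simp
    moreover have "0 \<le> (ln (1 + (x - t)\<^sup>2) - 1)\<^sup>2" by simp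
    ultimately show "norm (ln (1 + (x - t)\<^sup>2)) \<le> norm (1 + (ln (1 + (x - t)\<^sup>2))\<^sup>2)"
      by (simp add: power2_eq_square algebra_simps)
  qed
qed measurable

lemma second_moment_ln_shift_le:
  assumes m: "m > 1/2" and t: "\<bar>t\<bar> \<le> T"
  shows "integral\<^sup>L (nu m) (\<lambda>x. (ln (1 + (x - t)\<^sup>2))\<^sup>2)
    \<le> 2 * (ln 2 + ln (1 + T\<^sup>2))\<^sup>2 + 2 * integral\<^sup>L (nu m) (\<lambda>x. (ln (1 + x\<^sup>2))\<^sup>2)"
proof -
  interpret prob_space "nu m" by (rule prob_space_nu[OF m])
  have "t\<^sup>2 \<le> T\<^sup>2" using t abs_le_square_iff[of t T] by simp
  hence "ln (1 + t\<^sup>2) \<le> ln (1 + T\<^sup>2)" by (simp add: add_pos_nonneg)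
  hence shift: "(ln 2 + ln (1 + t\<^sup>2))\<^sup>2 \<le> (ln 2 + ln (1 + T\<^sup>2))\<^sup>2" by (intro power_mono) auto
  have "integral\<^sup>L (nu m) (\<lambda>x. (ln (1 + (x - t)\<^sup>2))\<^sup>2)
      \<le> integral\<^sup>L (nu m) (\<lambda>x. 2 * (ln 2 + ln (1 + t\<^sup>2))\<^sup>2 + 2 * (ln (1 + x\<^sup>2))\<^sup>2)"
    using integrable_nu_sq_ln_shift[OF m] integrable_nu_sq_ln[OF m]
    by (intro integral_mono sq_ln_one_plus_sq_diff_le) simp_all
  also have "\<dots> = 2 * (ln 2 + ln (1 + t\<^sup>2))\<^sup>2 + 2 * integral\<^sup>L (nu m) (\<lambda>x. (ln (1 + x\<^sup>2))\<^sup>2)"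
    using integrable_nu_sq_ln[OF m] by (simp add: prob_space)
  finally show ?thesis using shift by linarith
qed

lemma Fm_eq_lborel:
  assumes "m > 1/2"
  shows "Fm m t = (\<integral>x. nu_density m x * ln (1 + (x - t)\<^sup>2) \<partial>lborel)"
  unfolding Fm_def using assms by (rule integral_nu) simp

lemma integrable_lborel_nu_density_ln:
  assumes "m > 1/2"
  shows "integrable lborel (\<lambda>x. nu_density m x * ln (1 + (x - t)\<^sup>2))"
  using integrable_nu_ln_shift[OF assms] by (subst (asm) integrable_nu_iff[OF assms]) simp_all

lemma Fm_nonneg: "m > 1/2 \<Longrightarrow> Fm m t \<ge> 0"
  unfolding Fm_def by (rule Bochner_Integration.integral_nonneg) simp

lemma Fm_minus:
  assumes "m > 1/2"
  shows "Fm m (- t) = Fm m t"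
proof -
  have "Fm m (- t) = (\<integral>x. nu_density m x * ln (1 + (x + t)\<^sup>2) \<partial>lborel)"
    unfolding Fm_eq_lborel[OF assms] by simp
  also have "\<dots> = (\<integral>x. nu_density m (- x) * ln (1 + (- x + t)\<^sup>2) \<partial>lborel)"
    using lborel_integral_real_affine[of "-1" "\<lambda>x. nu_density m x * ln (1 + (x + t)\<^sup>2)" 0] by simp
  also have "\<dots> = Fm m t"
    unfolding Fm_eq_lborel[OF assms] by (simp add: nu_density_def power2_commute)
  finally show ?thesis .
qed

lemma nu_density_antimono:
  assumes "m > 1/2" "\<bar>u\<bar> \<le> \<bar>v\<bar>"
  shows "nu_density m v \<le> nu_density m u"
proof -
  have "(1 + v\<^sup>2) powr (- m) \<le> (1 + u\<^sup>2) powr (- m)"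
    using assms by (intro powr_mono2') (auto simp: abs_le_square_iff intro: add_pos_nonneg)
  thus ?thesis unfolding nu_density_def using cm_pos[OF assms(1)] by (simp add: mult_left_mono)
qed

lemma nu_density_reflection_nonneg:
  assumes m: "m > 1/2" and st: "0 \<le> s" "s \<le> t"
  shows "0 \<le> (nu_density m x - nu_density m (s + t - x))
                 * (ln (1 + (x - t)\<^sup>2) - ln (1 + (x - s)\<^sup>2))"
proof -
  have key: "(x - s)\<^sup>2 - (x - t)\<^sup>2 = (t - s) * (2 * x - s - t)"
    by (simp add: power2_eq_square algebra_simps)
  have pos: "0 < 1 + y\<^sup>2" for y :: real by (simp add: add_pos_nonneg)
  show ?thesis
  proof (cases "2 * x \<ge> s + t")
    case True
    have "nu_density m x \<le> nu_density m (s + t - x)"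
      using True st by (intro nu_density_antimono[OF m]) auto
    moreover have "(x - t)\<^sup>2 \<le> (x - s)\<^sup>2"
      using key True st mult_nonneg_nonneg[of "t - s" "2 * x - s - t"] by linarith
    ultimately show ?thesis using pos by (intro mult_nonpos_nonpos) simp_all
  next
    case False
    have "nu_density m (s + t - x) \<le> nu_density m x"
      using False st by (intro nu_density_antimono[OF m]) auto
    moreover have "(x - s)\<^sup>2 \<le> (x - t)\<^sup>2"
      using key False st mult_nonneg_nonpos[of "t - s" "2 * x - s - t"] by linarith
    ultimately show ?thesis using pos by (intro mult_nonneg_nonneg) simp_all
  qed
qed

text \<open>The reflection \<open>x \<mapsto> s + t - x\<close> preserves \<open>lborel\<close> and swaps the two logarithms, so
  \<open>2 (F t - F s)\<close> integrates the product of two differences that always have the same sign: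
  the density is larger at the point closer to \<open>0\<close>, where the log-difference is nonnegative.\<close>

lemma Fm_mono:
  assumes m: "m > 1/2" and st: "0 \<le> s" "s \<le> t"
  shows "Fm m s \<le> Fm m t"
proof -
  define h where "h x = nu_density m x * (ln (1 + (x - t)\<^sup>2) - ln (1 + (x - s)\<^sup>2))" for x
  have h: "integrable lborel h"
    unfolding h_def right_diff_distrib using integrable_lborel_nu_density_ln[OF m] by auto
  have h_reflect: "integrable lborel (\<lambda>x. h (s + t - x))"
    using h lborel_integrable_real_affine_iff[of "-1" h "s + t"] by simp
  have "Fm m t - Fm m s = (\<integral>x. h x \<partial>lborel)"
    unfolding Fm_eq_lborel[OF m] h_def right_diff_distrib
    using integrable_lborel_nu_density_ln[OF m] by (subst Bochner_Integration.integral_diff) auto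
  moreover have "(\<integral>x. h x \<partial>lborel) = (\<integral>x. h (s + t - x) \<partial>lborel)"
    using lborel_integral_real_affine[of "-1" h "s + t"] by simp
  ultimately have "2 * (Fm m t - Fm m s) = (\<integral>x. h x + h (s + t - x) \<partial>lborel)"
    using h h_reflect by simp
  also have "\<dots> \<ge> 0"
  proof (rule Bochner_Integration.integral_nonneg)
    fix x
    have "h x + h (s + t - x) = (nu_density m x - nu_density m (s + t - x))
                                 * (ln (1 + (x - t)\<^sup>2) - ln (1 + (x - s)\<^sup>2))"
      unfolding h_def by (simp add: power2_commute algebra_simps)
    thus "0 \<le> h x + h (s + t - x)" using nu_density_reflection_nonneg[OF m st] by simp
  qed
  finally show ?thesis by simp
qed

lemma Fm_le_Fm_abs:
  assumes m: "m > 1/2" and "0 \<le> r" "r \<le> \<bar>t\<bar>"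
  shows "Fm m r \<le> Fm m t"
  using Fm_mono[OF m, of r "\<bar>t\<bar>"] assms Fm_minus[OF m, of t] by (cases "t \<ge> 0") auto

lemma nu_centre_mass_ge:
  assumes m: "m > 1/2" and a: "a > 0" "4 * Fm m 0 \<le> ln (1 + a\<^sup>2)"
  shows "measure (nu m) {-a..a} \<ge> 3/4"
proof -
  interpret prob_space "nu m" by (rule prob_space_nu[OF m])
  have \<kappa>: "ln (1 + a\<^sup>2) > 0" using a by (intro ln_gt_zero) simp
  have "prob {x. ln (1 + a\<^sup>2) \<le> ln (1 + x\<^sup>2)} \<le> Fm m 0 / ln (1 + a\<^sup>2)"
    using integral_Markov_inequality_measure[OF integrable_nu_ln_shift[OF m, of 0] sets.top _ \<kappa>]
    by (simp add: Fm_def space_nu)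
  also have "\<dots> \<le> 1/4" using a \<kappa> by (simp add: pos_divide_le_eq)
  finally have tail: "prob {x. ln (1 + a\<^sup>2) \<le> ln (1 + x\<^sup>2)} \<le> 1/4" .
  have "UNIV = {-a..a} \<union> {x. ln (1 + a\<^sup>2) \<le> ln (1 + x\<^sup>2)}"
  proof (intro set_eqI iffI)
    fix x :: real
    show "x \<in> {-a..a} \<union> {x. ln (1 + a\<^sup>2) \<le> ln (1 + x\<^sup>2)}"
    proof (cases "\<bar>x\<bar> \<le> a")
      case False
      hence "a\<^sup>2 \<le> x\<^sup>2" using a abs_le_square_iff[of a x] by simp
      thus ?thesis by (simp add: add_pos_nonneg)
    qed auto
  qed simp
  hence "1 \<le> prob {-a..a} + prob {x. ln (1 + a\<^sup>2) \<le> ln (1 + x\<^sup>2)}"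
    using measure_Un_le[of "{-a..a}" "nu m" "{x. ln (1 + a\<^sup>2) \<le> ln (1 + x\<^sup>2)}"]
    by (simp add: space_nu flip: prob_space)
  thus ?thesis using tail by linarith
qed

lemma ln_one_plus_sq_lipschitz:
  fixes u v :: real
  shows "\<bar>ln (1 + u\<^sup>2) - ln (1 + v\<^sup>2)\<bar> \<le> \<bar>u - v\<bar>"
proof -
  have ordered: "\<bar>ln (1 + b\<^sup>2) - ln (1 + a\<^sup>2)\<bar> \<le> b - a" if ab: "a < b" for a b :: real
  proof -
    have deriv: "((\<lambda>x. ln (1 + x\<^sup>2)) has_real_derivative (2 * x / (1 + x\<^sup>2))) (at x)" for x :: real
      by (auto intro!: derivative_eq_intros simp: add_pos_nonneg power2_eq_square)
    obtain z where "ln (1 + b\<^sup>2) - ln (1 + a\<^sup>2) = (b - a) * (2 * z / (1 + z\<^sup>2))"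
      using MVT2[OF ab deriv] by blast
    moreover have "\<bar>2 * z\<bar> \<le> 1 + z\<^sup>2"
      using zero_le_power2[of "\<bar>z\<bar> - 1"] by (simp add: power2_diff)
    hence "\<bar>2 * z / (1 + z\<^sup>2)\<bar> \<le> 1" by (simp add: add_pos_nonneg)
    ultimately show ?thesis
      using ab mult_left_mono[of "\<bar>2 * z / (1 + z\<^sup>2)\<bar>" 1 "b - a"] by (simp add: abs_mult)
  qed
  show ?thesis
    using ordered[of u v] ordered[of v u] by (cases u v rule: linorder_cases) (simp_all add: abs_minus_commute)
qed

lemma Ln_lipschitz: "\<bar>Ln X n t \<omega> - Ln X n \<tau> \<omega>\<bar> \<le> \<bar>t - \<tau>\<bar>"
proof -
  have "\<bar>(\<Sum>i=1..n. ln (1 + (X i \<omega> - t)\<^sup>2)) - (\<Sum>i=1..n. ln (1 + (X i \<omega> - \<tau>)\<^sup>2))\<bar>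
      \<le> (\<Sum>i=1..n. \<bar>ln (1 + (X i \<omega> - t)\<^sup>2) - ln (1 + (X i \<omega> - \<tau>)\<^sup>2)\<bar>)"
    unfolding sum_subtractf[symmetric] by (rule sum_abs)
  also have "\<dots> \<le> (\<Sum>i=1..n. \<bar>t - \<tau>\<bar>)"
    by (intro sum_mono order.trans[OF ln_one_plus_sq_lipschitz]) simp
  finally show ?thesis
    unfolding Ln_def right_diff_distrib[symmetric] abs_mult
    by (cases "n = 0") (simp_all add: field_simps)
qed

lemma exp_minus_le_quadratic:
  fixes u :: real assumes "u \<ge> 0"
  shows "exp (-u) \<le> 1 - u + u\<^sup>2/2"
proof -
  define g where "g u = 1 - u + u\<^sup>2/2 - exp (-u)" for u :: real
  have d: "(g has_real_derivative (-1 + x + exp (-x))) (at x)" for x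
    unfolding g_def by (auto intro!: derivative_eq_intros simp: power2_eq_square)
  have "g 0 \<le> g u"
  proof (rule DERIV_nonneg_imp_nondecreasing[OF assms])
    fix x assume "0 \<le> x" "x \<le> u"
    have "1 + (-x) \<le> exp (-x)" by (rule exp_ge_add_one_self)
    then show "\<exists>y. DERIV g x :> y \<and> 0 \<le> y" using d by (intro exI[of _ "-1 + x + exp (-x)"]) auto
  qed
  then show ?thesis by (simp add: g_def)
qed

lemma (in prob_space) expectation_exp_neg_le:
  fixes Y :: "'a \<Rightarrow> real"
  assumes [measurable]: "Y \<in> borel_measurable M" and nonneg: "\<And>x. 0 \<le> Y x"
    and "integrable M Y" "integrable M (\<lambda>x. (Y x)\<^sup>2)" and "s \<ge> 0"
  shows "expectation (\<lambda>x. exp (- s * Y x)) \<le> exp (- s * expectation Y + s\<^sup>2 / 2 * expectation (\<lambda>x. (Y x)\<^sup>2))"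
proof -
  have "integrable M (\<lambda>x. exp (- s * Y x))"
    using nonneg \<open>s \<ge> 0\<close> by (intro integrable_const_bound[where B=1]) auto
  hence "expectation (\<lambda>x. exp (- s * Y x)) \<le> expectation (\<lambda>x. 1 - s * Y x + s\<^sup>2 / 2 * (Y x)\<^sup>2)"
    using assms exp_minus_le_quadratic[of "s * Y x" for x]
    by (intro integral_mono) (auto simp: power_mult_distrib)
  also have "\<dots> = 1 + (- s * expectation Y + s\<^sup>2 / 2 * expectation (\<lambda>x. (Y x)\<^sup>2))"
    using assms by (simp add: prob_space)
  also have "\<dots> \<le> exp (- s * expectation Y + s\<^sup>2 / 2 * expectation (\<lambda>x. (Y x)\<^sup>2))"
    by (rule exp_ge_add_one_self)
  finally show ?thesis .
qed

text \<open>A Bernstein-type lower-tail bound: for nonnegative summands only the second moments enter,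
  because \<open>exp (-u) \<le> 1 - u + u\<^sup>2/2\<close> for \<open>u \<ge> 0\<close>.\<close>

lemma (in prob_space) indep_sum_lower_tail:
  fixes Y :: "'i \<Rightarrow> 'a \<Rightarrow> real"
  assumes fin: "finite I" and ne: "I \<noteq> {}" and indep: "indep_vars (\<lambda>_. borel) Y I"
    and nonneg: "\<And>i x. i \<in> I \<Longrightarrow> 0 \<le> Y i x"
    and int: "\<And>i. i \<in> I \<Longrightarrow> integrable M (Y i)"
    and int_sq: "\<And>i. i \<in> I \<Longrightarrow> integrable M (\<lambda>x. (Y i x)\<^sup>2)"
    and second_moment: "\<And>i. i \<in> I \<Longrightarrow> expectation (\<lambda>x. (Y i x)\<^sup>2) \<le> \<sigma>"
    and "\<sigma> > 0" "\<epsilon> > 0"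
  shows "prob {x\<in>space M. (\<Sum>i\<in>I. Y i x) \<le> (\<Sum>i\<in>I. expectation (Y i)) - \<epsilon>}
           \<le> exp (- (\<epsilon>\<^sup>2 / (2 * real (card I) * \<sigma>)))"
proof -
  define n where "n = real (card I)"
  have n: "n > 0" using fin ne by (simp add: n_def card_gt_0_iff)
  define s where "s = \<epsilon> / (n * \<sigma>)"
  have s: "s > 0" using n \<open>\<sigma> > 0\<close> \<open>\<epsilon> > 0\<close> by (simp add: s_def)
  define \<mu> where "\<mu> = (\<Sum>i\<in>I. expectation (Y i))"
  have [measurable]: "Y i \<in> borel_measurable M" if "i \<in> I" for i
    using indep that unfolding indep_vars_def by blast
  have mgf: "(\<integral>\<^sup>+x. ennreal (exp (- s * Y i x)) \<partial>M) \<le> ennreal (exp (- s * expectation (Y i) + s\<^sup>2 * \<sigma> / 2))"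
    if i: "i \<in> I" for i
  proof -
    have [measurable]: "Y i \<in> borel_measurable M" using i by simp
    have "(\<integral>\<^sup>+x. ennreal (exp (- s * Y i x)) \<partial>M) = ennreal (expectation (\<lambda>x. exp (- s * Y i x)))"
      using nonneg[OF i] s by (intro nn_integral_eq_integral integrable_const_bound[where B=1]) auto
    also have "\<dots> \<le> ennreal (exp (- s * expectation (Y i) + s\<^sup>2 * \<sigma> / 2))"
      using expectation_exp_neg_le[of "Y i" s] second_moment[OF i] nonneg[OF i] int[OF i] int_sq[OF i] s i
      by (intro ennreal_leI order.trans[OF _ exp_mono[of _ "- s * expectation (Y i) + s\<^sup>2 * \<sigma> / 2"]])
         (auto intro: mult_left_mono)
    finally show ?thesis .
  qed
  have "ennreal (prob {x\<in>space M. (\<Sum>i\<in>I. Y i x) \<le> \<mu> - \<epsilon>})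
        \<le> ennreal (exp (s * (\<mu> - \<epsilon>))) *
           (\<integral>\<^sup>+x. ennreal (exp (- s * (\<Sum>i\<in>I. Y i x))) * indicator (space M) x \<partial>M)"
    unfolding emeasure_eq_measure[symmetric]
    by (intro Chernoff_ineq_nn_integral_le s) (auto intro!: borel_measurable_sum)
  also have "(\<integral>\<^sup>+x. ennreal (exp (- s * (\<Sum>i\<in>I. Y i x))) * indicator (space M) x \<partial>M)
      = (\<integral>\<^sup>+x. (\<Prod>i\<in>I. ennreal (exp (- s * Y i x))) \<partial>M)"
    by (intro nn_integral_cong) (simp_all add: sum_distrib_left exp_sum fin prod_ennreal)
  also have "\<dots> = (\<Prod>i\<in>I. \<integral>\<^sup>+x. ennreal (exp (- s * Y i x)) \<partial>M)"
    by (intro indep_vars_nn_integral fin indep_vars_compose2[OF indep]) auto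
  also have "ennreal (exp (s * (\<mu> - \<epsilon>))) * \<dots> \<le>
      ennreal (exp (s * (\<mu> - \<epsilon>))) * (\<Prod>i\<in>I. ennreal (exp (- s * expectation (Y i) + s\<^sup>2 * \<sigma> / 2)))"
    using mgf by (intro mult_left_mono prod_mono_ennreal) auto
  also have "\<dots> = ennreal (exp (s * (\<mu> - \<epsilon>)) * (\<Prod>i\<in>I. exp (- s * expectation (Y i) + s\<^sup>2 * \<sigma> / 2)))"
    by (simp add: prod_ennreal prod_nonneg flip: ennreal_mult)
  also have "\<dots> = ennreal (exp (s * (\<mu> - \<epsilon>) + (\<Sum>i\<in>I. - s * expectation (Y i) + s\<^sup>2 * \<sigma> / 2)))"
    by (simp add: exp_sum fin exp_add)
  also have "(\<Sum>i\<in>I. - s * expectation (Y i) + s\<^sup>2 * \<sigma> / 2) = - s * \<mu> + n * (s\<^sup>2 * \<sigma> / 2)"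
    by (simp add: sum.distrib \<mu>_def sum_distrib_left n_def sum_negf sum_subtractf)
  also have "s * (\<mu> - \<epsilon>) + (- s * \<mu> + n * (s\<^sup>2 * \<sigma> / 2)) = - (\<epsilon>\<^sup>2 / (2 * n * \<sigma>))"
    using n \<open>\<sigma> > 0\<close> by (simp add: s_def field_simps power2_eq_square)
  finally show ?thesis
    by (subst (asm) ennreal_le_iff) (auto simp: \<mu>_def n_def)
qed

lemma grid_point_below:
  fixes \<delta> r u T :: real
  assumes "\<delta> > 0" "r \<le> u" "u < T"
  obtains k where "k \<le> nat \<lceil>(T - r) / \<delta>\<rceil>" "r + real k * \<delta> \<le> u" "u < r + real k * \<delta> + \<delta>"
proof
  define k where "k = nat \<lfloor>(u - r) / \<delta>\<rfloor>"
  have k: "real k = of_int \<lfloor>(u - r) / \<delta>\<rfloor>"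
    unfolding k_def using assms by simp
  have "(u - r) / \<delta> \<le> (T - r) / \<delta>" using assms by (simp add: divide_right_mono)
  thus "k \<le> nat \<lceil>(T - r) / \<delta>\<rceil>" unfolding k_def by (intro nat_mono) linarith
  have "real k \<le> (u - r) / \<delta>" "(u - r) / \<delta> < real k + 1" unfolding k by linarith+
  thus "r + real k * \<delta> \<le> u" "u < r + real k * \<delta> + \<delta>"
    using assms by (simp_all add: field_simps)
qed

lemma union_bound_exp_le:
  fixes V c \<delta> D :: real and K n :: nat
  assumes V: "V > 0" and c: "V / 72 \<le> c" "4 * D\<^sup>2 \<le> c" and \<delta>: "0 < \<delta>" "\<delta> < D"
    and n: "V * ln (2 * real K + 2) / (9 * \<delta>\<^sup>2) \<le> real n"
  shows "(2 * real K + 2) * exp (- (real n * (6 * \<delta>)\<^sup>2 / (2 * V))) + exp (- (real n / 32))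
          \<le> 2 * exp (- (\<delta>\<^sup>2 / (8 * c)) * real n)"
proof -
  define q where "q = 9 * \<delta>\<^sup>2 / V * real n"
  have "\<delta>\<^sup>2 / (8 * c) \<le> \<delta>\<^sup>2 / (V / 9)"
    using V c by (intro divide_left_mono) auto
  hence rate: "\<delta>\<^sup>2 / (8 * c) \<le> 9 * \<delta>\<^sup>2 / V" by simp
  have "ln (2 * real K + 2) \<le> q"
    using n V \<delta> by (simp add: q_def field_simps)
  hence "exp (ln (2 * real K + 2)) \<le> exp q" by (simp only: exp_le_cancel_iff)
  moreover have "0 < 2 * real K + 2" by simp
  ultimately have "2 * real K + 2 \<le> exp q" by (simp only: exp_ln)
  moreover have exponent: "real n * (6 * \<delta>)\<^sup>2 / (2 * V) = q + q"
    using V by (simp add: q_def power2_eq_square field_simps)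
  ultimately have "(2 * real K + 2) * exp (- (real n * (6 * \<delta>)\<^sup>2 / (2 * V))) \<le> exp q * exp (- (q + q))"
    unfolding exponent by (intro mult_right_mono) simp_all
  also have "\<dots> = exp (- q)" by (simp flip: exp_add)
  also have "\<dots> \<le> exp (- (\<delta>\<^sup>2 / (8 * c)) * real n)"
    using mult_right_mono[OF rate, of "real n"] by (simp add: q_def)
  finally have near: "(2 * real K + 2) * exp (- (real n * (6 * \<delta>)\<^sup>2 / (2 * V)))
                        \<le> exp (- (\<delta>\<^sup>2 / (8 * c)) * real n)" .
  have "\<delta>\<^sup>2 \<le> D\<^sup>2" using \<delta> by (intro power_mono) auto
  hence "\<delta>\<^sup>2 / (8 * c) \<le> 1 / 32" using c V by (simp add: field_simps)
  hence far: "exp (- (real n / 32)) \<le> exp (- (\<delta>\<^sup>2 / (8 * c)) * real n)"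
    using mult_right_mono[of "\<delta>\<^sup>2 / (8 * c)" "1/32" "real n"] by simp
  show ?thesis using near far by linarith
qed

definition tail_radius :: "real \<Rightarrow> real" where
  "tail_radius m = exp (2 * Fm m 0 + (m - 1/2) / 2)"

lemma tail_radius:
  assumes "m > 1/2"
  shows "tail_radius m > 0" "4 * Fm m 0 \<le> ln (1 + (tail_radius m)\<^sup>2)"
    and "Fm m 0 + (m - 1/2) / 4 \<le> ln (1 + (tail_radius m)\<^sup>2) / 2"
proof -
  have "4 * Fm m 0 + (m - 1/2) = ln ((tail_radius m)\<^sup>2)"
    by (simp add: tail_radius_def ln_realpow flip: exp_of_nat_mult)
  also have "\<dots> \<le> ln (1 + (tail_radius m)\<^sup>2)"
    by (rule ln_mono) (simp_all add: tail_radius_def)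
  finally have "4 * Fm m 0 + (m - 1/2) \<le> ln (1 + (tail_radius m)\<^sup>2)" .
  thus "4 * Fm m 0 \<le> ln (1 + (tail_radius m)\<^sup>2)" using assms by linarith
  show "Fm m 0 + (m - 1/2) / 4 \<le> ln (1 + (tail_radius m)\<^sup>2) / 2"
    using \<open>4 * Fm m 0 + (m - 1/2) \<le> _\<close> assms Fm_nonneg[OF assms, of 0] by (simp add: field_simps)
qed (simp add: tail_radius_def)

definition moment_bound :: "real \<Rightarrow> real" where
  "moment_bound m = 2 * (ln 2 + ln (1 + (2 * tail_radius m)\<^sup>2))\<^sup>2
                      + 2 * integral\<^sup>L (nu m) (\<lambda>x. (ln (1 + x\<^sup>2))\<^sup>2) + 1"

lemma moment_bound_pos: "m > 1/2 \<Longrightarrow> moment_bound m > 0"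
  unfolding moment_bound_def by (intro add_nonneg_pos) (auto intro: Bochner_Integration.integral_nonneg)

lemma second_moment_le_moment_bound:
  assumes "m > 1/2" "\<bar>\<tau>\<bar> \<le> 2 * tail_radius m"
  shows "integral\<^sup>L (nu m) (\<lambda>x. (ln (1 + (x - \<tau>)\<^sup>2))\<^sup>2) \<le> moment_bound m"
  using second_moment_ln_shift_le[OF assms] unfolding moment_bound_def by linarith

locale iid_nu_sample = prob_space M for M :: "'a measure" +
  fixes X :: "nat \<Rightarrow> 'a \<Rightarrow> real" and m :: real
  assumes m_gt: "m > 1/2"
    and X_measurable [measurable]: "\<And>i. i \<ge> 1 \<Longrightarrow> X i \<in> borel_measurable M"
    and X_distr: "\<And>i. i \<ge> 1 \<Longrightarrow> distr M borel (X i) = nu m"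
    and X_indep: "indep_vars (\<lambda>_. borel) X {1..}"
begin

lemma sample_mean_measurable:
  assumes [measurable]: "\<phi> \<in> borel_measurable borel"
  shows "(\<lambda>\<omega>. (1 / real n) * (\<Sum>i=1..n. \<phi> (X i \<omega>))) \<in> borel_measurable M"
proof -
  have "(\<lambda>\<omega>. \<phi> (X i \<omega>)) \<in> borel_measurable M" if "i \<in> {1..n}" for i
  proof -
    have [measurable]: "X i \<in> borel_measurable M" using that by simp
    show ?thesis by measurable
  qed
  thus ?thesis by (intro borel_measurable_times borel_measurable_sum) auto
qed

lemma sample_mean_lower_tail:
  fixes \<phi> :: "real \<Rightarrow> real"
  assumes [measurable]: "\<phi> \<in> borel_measurable borel" and nonneg: "\<And>x. 0 \<le> \<phi> x"
    and int: "integrable (nu m) \<phi>" and int_sq: "integrable (nu m) (\<lambda>x. (\<phi> x)\<^sup>2)"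
    and second_moment: "integral\<^sup>L (nu m) (\<lambda>x. (\<phi> x)\<^sup>2) \<le> \<sigma>"
    and "\<sigma> > 0" "\<epsilon> > 0" "n \<ge> 1"
  shows "prob {\<omega>\<in>space M. (1 / real n) * (\<Sum>i=1..n. \<phi> (X i \<omega>)) \<le> integral\<^sup>L (nu m) \<phi> - \<epsilon>}
           \<le> exp (- (real n * \<epsilon>\<^sup>2 / (2 * \<sigma>)))"
proof -
  have distr_eq: "distr M borel (X i) = nu m" if "i \<in> {1..n}" for i
    using that X_distr by simp
  have comp: "integrable M (\<lambda>\<omega>. f (X i \<omega>)) \<and> expectation (\<lambda>\<omega>. f (X i \<omega>)) = integral\<^sup>L (nu m) f"
    if "i \<in> {1..n}" "f \<in> borel_measurable borel" "integrable (nu m) f" for i and f :: "real \<Rightarrow> real"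
    using that integrable_distr_eq[of "X i" M borel f] integral_distr[of "X i" M borel f]
    by (simp add: distr_eq)
  have indep: "indep_vars (\<lambda>_. borel) (\<lambda>i \<omega>. \<phi> (X i \<omega>)) {1..n}"
    by (rule indep_vars_compose2[OF indep_vars_subset[OF X_indep]]) auto
  have "prob {\<omega>\<in>space M. (\<Sum>i\<in>{1..n}. \<phi> (X i \<omega>))
                \<le> (\<Sum>i\<in>{1..n}. expectation (\<lambda>\<omega>. \<phi> (X i \<omega>))) - real n * \<epsilon>}
        \<le> exp (- ((real n * \<epsilon>)\<^sup>2 / (2 * real (card {1..n}) * \<sigma>)))"
    using assms comp[OF _ _ int] comp[OF _ _ int_sq] by (intro indep_sum_lower_tail[OF _ _ indep]) auto
  moreover have "(\<Sum>i\<in>{1..n}. expectation (\<lambda>\<omega>. \<phi> (X i \<omega>))) = real n * integral\<^sup>L (nu m) \<phi>"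
    using comp[OF _ _ int] by simp
  moreover have "(real n * \<epsilon>)\<^sup>2 / (2 * real (card {1..n}) * \<sigma>) = real n * \<epsilon>\<^sup>2 / (2 * \<sigma>)"
    using \<open>n \<ge> 1\<close> by (simp add: power2_eq_square)
  moreover have "(1 / real n) * S \<le> I - \<epsilon> \<longleftrightarrow> S \<le> real n * I - real n * \<epsilon>" for S I
    using \<open>n \<ge> 1\<close> by (simp add: field_simps)
  ultimately show ?thesis by simp
qed

lemma Ln_far_lower_bound:
  assumes a: "a > 0" and F0: "4 * Fm m 0 \<le> ln (1 + a\<^sup>2)" and n: "n \<ge> 1"
  obtains E where "E \<in> sets M" "prob E \<le> exp (- (real n / 32))"
    "\<And>\<omega> t. \<omega> \<in> space M - E \<Longrightarrow> 2 * a \<le> \<bar>t\<bar> \<Longrightarrow> ln (1 + a\<^sup>2) / 2 \<le> Ln X n t \<omega>"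
proof
  interpret nu: prob_space "nu m" by (rule prob_space_nu[OF m_gt])
  define \<kappa> where "\<kappa> = ln (1 + a\<^sup>2)"
  have \<kappa>: "\<kappa> > 0" unfolding \<kappa>_def using a by (intro ln_gt_zero) simp
  define \<phi> :: "real \<Rightarrow> real" where "\<phi> = indicator {-a..a}"
  have [measurable]: "\<phi> \<in> borel_measurable borel" unfolding \<phi>_def by simp
  have int: "integrable (nu m) \<phi>" and int_sq: "integrable (nu m) (\<lambda>x. (\<phi> x)\<^sup>2)"
    by (auto intro!: nu.integrable_const_bound[where B=1] simp: \<phi>_def indicator_def)
  have mean: "integral\<^sup>L (nu m) \<phi> \<ge> 3/4"
    using nu_centre_mass_ge[OF m_gt a F0] by (simp add: \<phi>_def)
  define E where "E = {\<omega>\<in>space M. (1 / real n) * (\<Sum>i=1..n. \<phi> (X i \<omega>)) \<le> 1/2}"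
  show "E \<in> sets M" unfolding E_def using sample_mean_measurable by measurable
  have "prob E \<le> prob {\<omega>\<in>space M. (1 / real n) * (\<Sum>i=1..n. \<phi> (X i \<omega>)) \<le> integral\<^sup>L (nu m) \<phi> - 1/4}"
    using mean sample_mean_measurable by (intro finite_measure_mono) (auto simp: E_def)
  also have "\<dots> \<le> exp (- (real n * (1/4)\<^sup>2 / (2 * 1)))"
  proof (rule sample_mean_lower_tail[OF _ _ int int_sq])
    have "(\<lambda>x. (\<phi> x)\<^sup>2) = \<phi>" by (auto simp: \<phi>_def indicator_def)
    thus "integral\<^sup>L (nu m) (\<lambda>x. (\<phi> x)\<^sup>2) \<le> 1" by (simp add: \<phi>_def nu.prob_le_1)
  qed (use n in \<open>simp_all add: \<phi>_def\<close>)
  finally show "prob E \<le> exp (- (real n / 32))" by (simp add: power2_eq_square)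
  fix \<omega> t
  assume \<omega>: "\<omega> \<in> space M - E" and t: "2 * a \<le> \<bar>t\<bar>"
  have "\<kappa> * \<phi> x \<le> ln (1 + (x - t)\<^sup>2)" for x
  proof (cases "\<bar>x\<bar> \<le> a")
    case True
    hence "a\<^sup>2 \<le> (x - t)\<^sup>2" using a t by (simp add: abs_le_square_iff[symmetric])
    thus ?thesis using True by (simp add: \<phi>_def \<kappa>_def indicator_def abs_le_iff add_pos_nonneg)
  qed (auto simp: \<phi>_def indicator_def)
  hence "\<kappa> * ((1 / real n) * (\<Sum>i=1..n. \<phi> (X i \<omega>))) \<le> Ln X n t \<omega>"
    unfolding Ln_def sum_distrib_left mult.left_commute[of \<kappa>] by (intro mult_left_mono sum_mono) auto
  moreover have "1/2 < (1 / real n) * (\<Sum>i=1..n. \<phi> (X i \<omega>))" using \<omega> by (auto simp: E_def)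
  hence "\<kappa> / 2 < \<kappa> * ((1 / real n) * (\<Sum>i=1..n. \<phi> (X i \<omega>)))"
    using mult_strict_left_mono[OF _ \<kappa>] by fastforce
  ultimately show "ln (1 + a\<^sup>2) / 2 \<le> Ln X n t \<omega>" unfolding \<kappa>_def by linarith
qed

lemma Ln_measurable [measurable]: "(\<lambda>\<omega>. Ln X n t \<omega>) \<in> borel_measurable M"
  unfolding Ln_def by (rule sample_mean_measurable) simp

lemma Ln_lower_tail:
  assumes "n \<ge> 1" "\<epsilon> > 0" "V > 0"
    and "integral\<^sup>L (nu m) (\<lambda>x. (ln (1 + (x - \<tau>)\<^sup>2))\<^sup>2) \<le> V"
  shows "prob {\<omega>\<in>space M. Ln X n \<tau> \<omega> \<le> Fm m \<tau> - \<epsilon>} \<le> exp (- (real n * \<epsilon>\<^sup>2 / (2 * V)))"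
  unfolding Ln_def Fm_def using assms integrable_nu_ln_shift[OF m_gt] integrable_nu_sq_ln_shift[OF m_gt]
  by (intro sample_mean_lower_tail) simp_all

lemma Ln_near_lower_bound:
  assumes r: "r > 0" and \<delta>: "\<delta> > 0" and "\<epsilon> > 0" "n \<ge> 1" "V > 0"
    and moment: "\<And>\<tau>. \<bar>\<tau>\<bar> \<le> T \<Longrightarrow> integral\<^sup>L (nu m) (\<lambda>x. (ln (1 + (x - \<tau>)\<^sup>2))\<^sup>2) \<le> V"
  obtains E where "E \<in> sets M"
    "prob E \<le> (2 * real (nat \<lceil>(T - r) / \<delta>\<rceil>) + 2) * exp (- (real n * \<epsilon>\<^sup>2 / (2 * V)))"
    "\<And>\<omega> t. \<omega> \<in> space M - E \<Longrightarrow> r \<le> \<bar>t\<bar> \<Longrightarrow> \<bar>t\<bar> < T \<Longrightarrow> Fm m r - \<epsilon> - \<delta> < Ln X n t \<omega>"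
proof
  define K where "K = nat \<lceil>(T - r) / \<delta>\<rceil>"
  define G where "G = (\<lambda>(k, s). s * (r + real k * \<delta>)) ` ({..K} \<times> {-1, 1}) \<inter> {\<tau>. \<bar>\<tau>\<bar> \<le> T}"
  have "finite G" unfolding G_def by simp
  have "card G \<le> card ((\<lambda>(k, s). s * (r + real k * \<delta>)) ` ({..K} \<times> {-1, 1}))"
    unfolding G_def by (intro card_mono) auto
  also have "\<dots> \<le> card ({..K} \<times> {-1, 1 :: real})" by (rule card_image_le) simp
  finally have card_G: "real (card G) \<le> 2 * real K + 2" by (simp add: card_cartesian_product)
  define E where "E = (\<Union>\<tau>\<in>G. {\<omega>\<in>space M. Ln X n \<tau> \<omega> \<le> Fm m \<tau> - \<epsilon>})"
  show "E \<in> sets M" unfolding E_def using \<open>finite G\<close> by (intro sets.finite_UN) measurable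
  have "prob E \<le> (\<Sum>\<tau>\<in>G. prob {\<omega>\<in>space M. Ln X n \<tau> \<omega> \<le> Fm m \<tau> - \<epsilon>})"
    unfolding E_def using \<open>finite G\<close> by (intro finite_measure_subadditive_finite) auto
  also have "\<dots> \<le> (\<Sum>\<tau>\<in>G. exp (- (real n * \<epsilon>\<^sup>2 / (2 * V))))"
    using assms by (intro sum_mono Ln_lower_tail moment) (auto simp: G_def)
  also have "\<dots> \<le> (2 * real K + 2) * exp (- (real n * \<epsilon>\<^sup>2 / (2 * V)))"
    using card_G by (simp add: mult_right_mono)
  finally show "prob E \<le> (2 * real (nat \<lceil>(T - r) / \<delta>\<rceil>) + 2) * exp (- (real n * \<epsilon>\<^sup>2 / (2 * V)))"
    unfolding K_def .
  fix \<omega> t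
  assume \<omega>: "\<omega> \<in> space M - E" and t: "r \<le> \<bar>t\<bar>" "\<bar>t\<bar> < T"
  obtain k where k: "k \<le> K" "r + real k * \<delta> \<le> \<bar>t\<bar>" "\<bar>t\<bar> < r + real k * \<delta> + \<delta>"
    using grid_point_below[OF \<delta> t] unfolding K_def by blast
  define \<tau> where "\<tau> = sgn t * (r + real k * \<delta>)"
  have \<tau>_abs: "\<bar>\<tau>\<bar> = r + real k * \<delta>" and "t \<noteq> 0"
    using r \<delta> t by (auto simp: \<tau>_def abs_mult)
  hence "\<tau> \<in> G"
    using k t unfolding G_def \<tau>_def by (intro IntI image_eqI[where x="(k, sgn t)"]) (auto simp: sgn_if)
  hence "Fm m \<tau> - \<epsilon> < Ln X n \<tau> \<omega>" using \<omega> by (auto simp: E_def)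
  moreover have "Fm m r \<le> Fm m \<tau>"
    using \<tau>_abs r \<delta> by (intro Fm_le_Fm_abs[OF m_gt]) auto
  moreover have "\<bar>t - \<tau>\<bar> < \<delta>"
    using k \<open>t \<noteq> 0\<close> by (cases "t > 0") (auto simp: \<tau>_def)
  moreover have "Ln X n \<tau> \<omega> - Ln X n t \<omega> \<le> \<bar>t - \<tau>\<bar>"
    using Ln_lipschitz[of X n \<tau> \<omega> t] by (simp add: abs_minus_commute)
  ultimately show "Fm m r - \<epsilon> - \<delta> < Ln X n t \<omega>" by linarith
qed

lemma inf_Ln_lower_tail:
  assumes "r > 0" "\<delta> > 0" "\<delta> < lam m r" "n \<ge> 1"
  shows "measure M {\<omega> \<in> space M. (INF t\<in>{t. \<bar>t\<bar> \<ge> r}. Ln X n t \<omega>) < Fm m 0 + \<delta>}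
    \<le> (2 * real (nat \<lceil>(2 * tail_radius m - r) / \<delta>\<rceil>) + 2)
         * exp (- (real n * (6 * \<delta>)\<^sup>2 / (2 * moment_bound m))) + exp (- (real n / 32))"
proof -
  have "8 * \<delta> < Fm m r - Fm m 0" "\<delta> < (m - 1/2) / 4" using assms by (auto simp: lam_def)
  hence \<delta>: "8 * \<delta> < Fm m r - Fm m 0" "Fm m 0 + \<delta> \<le> ln (1 + (tail_radius m)\<^sup>2) / 2"
    using tail_radius(3)[OF m_gt] by (auto simp: field_simps)
  obtain E\<^sub>1 where E\<^sub>1: "E\<^sub>1 \<in> sets M"
    "prob E\<^sub>1 \<le> (2 * real (nat \<lceil>(2 * tail_radius m - r) / \<delta>\<rceil>) + 2)
                  * exp (- (real n * (6 * \<delta>)\<^sup>2 / (2 * moment_bound m)))"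
    "\<And>\<omega> t. \<omega> \<in> space M - E\<^sub>1 \<Longrightarrow> r \<le> \<bar>t\<bar> \<Longrightarrow> \<bar>t\<bar> < 2 * tail_radius m \<Longrightarrow>
      Fm m r - 6 * \<delta> - \<delta> < Ln X n t \<omega>"
    using Ln_near_lower_bound[of r \<delta> "6 * \<delta>" n "moment_bound m" "2 * tail_radius m"] assms
      moment_bound_pos[OF m_gt] second_moment_le_moment_bound[OF m_gt] by auto
  obtain E\<^sub>2 where E\<^sub>2: "E\<^sub>2 \<in> sets M" "prob E\<^sub>2 \<le> exp (- (real n / 32))"
    "\<And>\<omega> t. \<omega> \<in> space M - E\<^sub>2 \<Longrightarrow> 2 * tail_radius m \<le> \<bar>t\<bar> \<Longrightarrow>
      ln (1 + (tail_radius m)\<^sup>2) / 2 \<le> Ln X n t \<omega>"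
    using Ln_far_lower_bound[OF tail_radius(1,2)[OF m_gt] \<open>n \<ge> 1\<close>] by blast
  have "{\<omega> \<in> space M. (INF t\<in>{t. \<bar>t\<bar> \<ge> r}. Ln X n t \<omega>) < Fm m 0 + \<delta>} \<subseteq> E\<^sub>1 \<union> E\<^sub>2"
  proof (rule subsetI, rule ccontr)
    fix \<omega> assume \<omega>: "\<omega> \<in> {\<omega> \<in> space M. (INF t\<in>{t. \<bar>t\<bar> \<ge> r}. Ln X n t \<omega>) < Fm m 0 + \<delta>}"
      and "\<omega> \<notin> E\<^sub>1 \<union> E\<^sub>2"
    hence "Fm m 0 + \<delta> \<le> Ln X n t \<omega>" if "\<bar>t\<bar> \<ge> r" for t
      using that E\<^sub>1(3)[of \<omega> t] E\<^sub>2(3)[of \<omega> t] \<delta> by (cases "\<bar>t\<bar> < 2 * tail_radius m") auto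
    hence "Fm m 0 + \<delta> \<le> (INF t\<in>{t. \<bar>t\<bar> \<ge> r}. Ln X n t \<omega>)"
      by (intro cINF_greatest) (auto intro: exI[of _ r])
    thus False using \<omega> by simp
  qed
  hence "measure M {\<omega> \<in> space M. (INF t\<in>{t. \<bar>t\<bar> \<ge> r}. Ln X n t \<omega>) < Fm m 0 + \<delta>} \<le> prob (E\<^sub>1 \<union> E\<^sub>2)"
    using E\<^sub>1(1) E\<^sub>2(1) by (intro finite_measure_mono) auto
  also have "\<dots> \<le> prob E\<^sub>1 + prob E\<^sub>2"
    using E\<^sub>1(1) E\<^sub>2(1) by (rule measure_Un_le)
  finally show ?thesis using E\<^sub>1(2) E\<^sub>2(2) by linarith
qed

end

theorem lemma5p3:
  fixes m :: real
  assumes "m > 1/2"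
  shows "\<exists>c>0. \<forall>r>0. \<forall>\<delta>. 0 < \<delta> \<and> \<delta> < lam m r \<longrightarrow>
           (\<exists>N::nat. \<forall>n\<ge>N. \<forall>(M::'a measure) (X::nat \<Rightarrow> 'a \<Rightarrow> real).
              prob_space M \<and>
              (\<forall>i\<ge>1. X i \<in> borel_measurable M \<and> distr M borel (X i) = nu m) \<and>
              prob_space.indep_vars M (\<lambda>_. borel) X {1..}
              \<longrightarrow> measure M {\<omega> \<in> space M.
                     (INF t\<in>{t. \<bar>t\<bar> \<ge> r}. Ln X n t \<omega>) < Fm m 0 + \<delta>}
                   \<le> 2 * exp (- (\<delta>\<^sup>2 / (8 * c)) * real n))"
proof -
  define V where "V = moment_bound m"
  define c where "c = max (V / 72) (4 * ((m - 1/2) / 4)\<^sup>2)"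
  have "V > 0" using moment_bound_pos[OF assms] by (simp add: V_def)
  show ?thesis
  proof (intro exI[of _ c] conjI allI impI, goal_cases)
    case 1
    show ?case using \<open>V > 0\<close> by (simp add: c_def)
  next
    case (2 r \<delta>)
    define K where "K = nat \<lceil>(2 * tail_radius m - r) / \<delta>\<rceil>"
    show ?case
    proof (intro exI[of _ "max 1 (nat \<lceil>V * ln (2 * real K + 2) / (9 * \<delta>\<^sup>2)\<rceil>)"] allI impI, goal_cases)
      case (1 n M X)
      hence n: "n \<ge> 1" "V * ln (2 * real K + 2) / (9 * \<delta>\<^sup>2) \<le> real n" by linarith+
      interpret iid_nu_sample M X m
        using 1 assms by (simp add: iid_nu_sample_def iid_nu_sample_axioms_def)
      have "measure M {\<omega> \<in> space M. (INF t\<in>{t. \<bar>t\<bar> \<ge> r}. Ln X n t \<omega>) < Fm m 0 + \<delta>}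
          \<le> (2 * real K + 2) * exp (- (real n * (6 * \<delta>)\<^sup>2 / (2 * V))) + exp (- (real n / 32))"
        unfolding K_def V_def using 2 n by (intro inf_Ln_lower_tail) auto
      also have "\<dots> \<le> 2 * exp (- (\<delta>\<^sup>2 / (8 * c)) * real n)"
        using 2 n \<open>V > 0\<close> by (intro union_bound_exp_le[where D = "(m - 1/2) / 4"]) (auto simp: c_def lam_def)
      finally show ?case .
    qed
  qed
qed

end
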